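(* Let $(Z_n)_{n\ge0}$ be a Galton--Watson process with $Z_0=1$ and offspring distribution $F$ on $\{0,1,2,\dots\}$ with mean $m:=\mathbb E\xi>1$, and let $W_n:=Z_n/m^n$. Assume $F$ is dominated varying, i.e. $\sup_x\overline F(x/2)/\overline F(x)<\infty$, and that for some $\delta>0$ and $c'<\infty$, $\overline F(xy)\le c'\,\overline F(x)/y^{1+\delta}$ for all $x,y>1$. Then there exists a constant $c<\infty$ such that $\Pr\{W_n>x\}\le c\overline F(x)$ for all $n$ and $x$.
   Context: The process is defined by $Z_{n+1}=\sum_{i=1}^{Z_n}\xi_i^{(n)}$, where $\xi_i^{(n)}$, $i\ge1$, $n\ge0$, are i.i.d. copies of a random variable $\xi$ with distribution $F$ on $\{0,1,2,\dots\}$; $\overline F(x):=\Pr\{\xi>x\}$ for real $x$. *)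

theory Defs
  imports "HOL-Probability.Probability"
begin

fun iid_sum :: "nat pmf \<Rightarrow> nat \<Rightarrow> nat pmf" where
  "iid_sum F 0 = return_pmf 0"
| "iid_sum F (Suc k) = bind_pmf (iid_sum F k) (\<lambda>s. map_pmf (\<lambda>x. s + x) F)"

fun gw :: "nat pmf \<Rightarrow> nat \<Rightarrow> nat pmf" where
  "gw F 0 = return_pmf 1"
| "gw F (Suc n) = bind_pmf (gw F n) (iid_sum F)"

definition Fbar :: "nat pmf \<Rightarrow> real \<Rightarrow> real" where
  "Fbar F x = measure_pmf.prob F {k. real k > x}"

definition offspring_mean :: "nat pmf \<Rightarrow> real" where
  "offspring_mean F = measure_pmf.expectation F real"

end

theory Submission
  imports Defs
begin

text \<open>
  Write \<open>T = Fbar F\<close>. A Chernoff bound for the sum of \<open>k\<close> i.i.d. copies of \<open>X\<close>, truncated at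
  \<open>s/r\<close>, gives \<open>P(X\<^sub>1 + \<dots> + X\<^sub>k > s) \<le> k P(X > s/r) + (e k EX/s)\<^sup>r\<close>. Averaging over a random
  number \<open>N\<close> of summands whose tail is \<open>O(T)\<close> and using dominated variation of \<open>T\<close> (which
  controls the truncated moment \<open>E N\<^sup>r; N \<le> L\<close> by \<open>L\<^sup>r T(L)\<close> for \<open>r\<close> large) yields
  \<open>P(S\<^sub>N > s) = O(T(s/EX)) + EN \<cdot> P(X > s/r)\<close>. Hence every generation has tail \<open>O(T)\<close>.
  For the uniform bound, \<open>Z\<^sub>N\<^sub>+\<^sub>n\<close> is a sum of \<open>Z\<^sub>N\<close> i.i.d. copies of \<open>Z\<^sub>n\<close>, so
  \<open>P(W\<^sub>N\<^sub>+\<^sub>n > x) \<le> A T(x) + m\<^sup>N P(W\<^sub>n > x y\<^sub>0)\<close> with \<open>y\<^sub>0 = m\<^sup>N/r\<close>; by the assumption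
  \<open>T(x y\<^sub>0) \<le> c' T(x)/y\<^sub>0\<^sup>1\<^sup>+\<^sup>\<delta>\<close> the second term is at most half of \<open>c T(x)\<close> once \<open>N\<close> is large,
  and strong induction on \<open>n\<close> closes with \<open>c \<ge> 2A\<close>.
\<close>

subsection \<open>Sums of i.i.d. copies\<close>

lemma iid_sum_Suc_first:
  "iid_sum G (Suc k) = bind_pmf G (\<lambda>x. map_pmf (\<lambda>s. s + x) (iid_sum G k))"
  by (simp add: map_pmf_def bind_commute_pmf[of "iid_sum G k" G] bind_assoc_pmf bind_return_pmf)

lemma iid_sum_add:
  "iid_sum G (a + b) = bind_pmf (iid_sum G a) (\<lambda>s. map_pmf (\<lambda>t. s + t) (iid_sum G b))"
proof (induction b)
  case 0
  then show ?case by (simp add: bind_return_pmf')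
next
  case (Suc b)
  have "iid_sum G (a + Suc b) = bind_pmf (iid_sum G (a + b)) (\<lambda>u. map_pmf (\<lambda>x. u + x) G)"
    by simp
  also have "\<dots> = bind_pmf (iid_sum G a)
      (\<lambda>s. bind_pmf (map_pmf (\<lambda>t. s + t) (iid_sum G b)) (\<lambda>u. map_pmf (\<lambda>x. u + x) G))"
    unfolding Suc by (simp add: bind_assoc_pmf)
  also have "\<dots> = bind_pmf (iid_sum G a) (\<lambda>s. map_pmf (\<lambda>t. s + t) (iid_sum G (Suc b)))"
    by (simp add: bind_map_pmf map_bind_pmf pmf.map_comp o_def add.assoc[symmetric])
  finally show ?case .
qed

lemma bind_iid_sum_iid_sum:
  "bind_pmf (iid_sum G k) (iid_sum F) = iid_sum (bind_pmf G (iid_sum F)) k"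
proof (induction k)
  case 0
  then show ?case by (simp add: bind_return_pmf)
next
  case (Suc k)
  have "bind_pmf (iid_sum G (Suc k)) (iid_sum F)
      = bind_pmf (iid_sum G k) (\<lambda>s. bind_pmf G
          (\<lambda>x. bind_pmf (iid_sum F s) (\<lambda>a. map_pmf (\<lambda>t. a + t) (iid_sum F x))))"
    by (simp add: bind_assoc_pmf bind_map_pmf iid_sum_add)
  also have "\<dots> = bind_pmf (iid_sum G k) (\<lambda>s. bind_pmf (iid_sum F s)
          (\<lambda>a. bind_pmf G (\<lambda>x. map_pmf (\<lambda>t. a + t) (iid_sum F x))))"
    by (subst bind_commute_pmf) simp
  also have "\<dots> = iid_sum (bind_pmf G (iid_sum F)) (Suc k)"
    by (simp add: Suc[symmetric] bind_assoc_pmf map_bind_pmf)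
  finally show ?case .
qed

lemma iid_sum_return_one: "iid_sum (return_pmf (Suc 0)) k = return_pmf k"
  by (induction k) (simp_all add: bind_return_pmf)

lemma gw_add: "gw F (N + n) = bind_pmf (gw F N) (iid_sum (gw F n))"
proof (induction n)
  case 0
  then show ?case by (simp add: iid_sum_return_one bind_return_pmf')
next
  case (Suc n)
  have "gw F (N + Suc n) = bind_pmf (gw F N) (\<lambda>k. bind_pmf (iid_sum (gw F n) k) (iid_sum F))"
    by (simp add: Suc bind_assoc_pmf)
  then show ?case
    by (simp add: bind_iid_sum_iid_sum)
qed

lemma set_pmf_iid_sum_le:
  assumes "\<forall>x\<in>set_pmf G. x \<le> U" "v \<in> set_pmf (iid_sum G k)"
  shows "v \<le> k * U"
  using assms(2)
proof (induction k arbitrary: v)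
  case 0
  then show ?case by simp
next
  case (Suc k)
  then obtain a b where "a \<in> set_pmf (iid_sum G k)" "b \<in> set_pmf G" "v = a + b"
    by auto
  then show ?case
    using Suc.IH assms(1) by fastforce
qed

lemma nn_integral_iid_sum_real:
  "(\<integral>\<^sup>+v. ennreal (real v) \<partial>iid_sum G k) = of_nat k * (\<integral>\<^sup>+x. ennreal (real x) \<partial>G)"
proof (induction k)
  case 0
  then show ?case by simp
next
  case (Suc k)
  have "(\<integral>\<^sup>+v. ennreal (real v) \<partial>iid_sum G (Suc k))
      = (\<integral>\<^sup>+s. ennreal (real s) + (\<integral>\<^sup>+x. ennreal (real x) \<partial>G) \<partial>iid_sum G k)"
    by (simp add: ennreal_plus nn_integral_add measure_pmf.emeasure_space_1)
  also have "\<dots> = (\<integral>\<^sup>+s. ennreal (real s) \<partial>iid_sum G k) + (\<integral>\<^sup>+x. ennreal (real x) \<partial>G)"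
    by (simp add: nn_integral_add measure_pmf.emeasure_space_1)
  finally show ?case
    using Suc by (simp add: algebra_simps)
qed

lemma nn_integral_gw_real:
  fixes F :: "nat pmf"
  assumes "(\<integral>\<^sup>+x. ennreal (real x) \<partial>F) = ennreal m" "m \<ge> 0"
  shows "(\<integral>\<^sup>+v. ennreal (real v) \<partial>gw F n) = ennreal (m ^ n)"
proof (induction n)
  case 0
  then show ?case by simp
next
  case (Suc n)
  have "(\<integral>\<^sup>+v. ennreal (real v) \<partial>gw F (Suc n)) = (\<integral>\<^sup>+k. ennreal (real k) \<partial>gw F n) * ennreal m"
    by (simp add: nn_integral_iid_sum_real assms(1) nn_integral_multc ennreal_of_nat_eq_real_of_nat)
  then show ?case
    using Suc assms(2) by (simp add: ennreal_mult' mult.commute)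
qed

lemma nn_integral_exp_iid_sum:
  "(\<integral>\<^sup>+s. ennreal (exp (l * real s)) \<partial>iid_sum G k) = (\<integral>\<^sup>+x. ennreal (exp (l * real x)) \<partial>G) ^ k"
proof (induction k)
  case 0
  then show ?case by simp
next
  case (Suc k)
  have "(\<integral>\<^sup>+s. ennreal (exp (l * real s)) \<partial>iid_sum G (Suc k))
      = (\<integral>\<^sup>+s. ennreal (exp (l * real s)) * (\<integral>\<^sup>+x. ennreal (exp (l * real x)) \<partial>G) \<partial>iid_sum G k)"
    by (simp add: distrib_left exp_add ennreal_mult nn_integral_cmult)
  also have "\<dots> = (\<integral>\<^sup>+s. ennreal (exp (l * real s)) \<partial>iid_sum G k) * (\<integral>\<^sup>+x. ennreal (exp (l * real x)) \<partial>G)"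
    by (simp add: nn_integral_multc)
  finally show ?case
    using Suc by (simp add: mult.commute)
qed

subsection \<open>Tail of a sum of i.i.d. copies\<close>

lemma emeasure_iid_sum_Suc:
  "emeasure (iid_sum G (Suc k)) {s. t < real s}
     = (\<integral>\<^sup>+x. emeasure (iid_sum G k) {s. t < real (s + x)} \<partial>G)"
  by (simp only: iid_sum_Suc_first emeasure_bind_pmf emeasure_map_pmf) (simp add: vimage_def)

lemma emeasure_iid_sum_le_truncated:
  "emeasure (iid_sum G k) {s. t < real s}
     \<le> of_nat k * emeasure G {x. U < x} + emeasure (iid_sum (map_pmf (\<lambda>x. min x U) G) k) {s. t < real s}"
proof (induction k arbitrary: t)
  case 0
  then show ?case by simp
next
  case (Suc k)
  let ?G' = "map_pmf (\<lambda>x. min x U) G"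
  let ?P = "emeasure G {x. U < x}"
  have pointwise: "emeasure (iid_sum G k) {s. t < real (s + x)}
      \<le> indicator {x. U < x} x + (of_nat k * ?P + emeasure (iid_sum ?G' k) {s. t < real (s + min x U)})"
    for x
  proof (cases "U < x")
    case True
    then show ?thesis
      using measure_pmf.emeasure_le_1[of "iid_sum G k"] by (simp add: add_increasing2)
  next
    case False
    have "{s. t < real (s + x)} = {s. t - real x < real s}"
      by auto
    then show ?thesis
      using Suc.IH[of "t - real x"] False by (simp add: algebra_simps)
  qed
  have "emeasure (iid_sum G (Suc k)) {s. t < real s}
      \<le> (\<integral>\<^sup>+x. indicator {x. U < x} x
            + (of_nat k * ?P + emeasure (iid_sum ?G' k) {s. t < real (s + min x U)}) \<partial>G)"
    unfolding emeasure_iid_sum_Suc by (intro nn_integral_mono pointwise)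
  also have "\<dots> = ?P + (of_nat k * ?P + emeasure (iid_sum ?G' (Suc k)) {s. t < real s})"
    unfolding emeasure_iid_sum_Suc
    by (simp add: nn_integral_add measure_pmf.emeasure_space_1 nn_integral_const)
  finally show ?case
    by (simp add: algebra_simps ring_distribs)
qed

lemma exp_le_chord:
  fixes l x U :: real
  assumes "0 \<le> x" "x \<le> U" "0 < U"
  shows "exp (l * x) \<le> 1 + (exp (l * U) - 1) * x / U"
proof -
  have "exp ((1 - x/U) *\<^sub>R 0 + (x/U) *\<^sub>R (l*U)) \<le> (1 - x/U) * exp 0 + (x/U) * exp (l*U)"
    by (rule convex_onD[OF exp_convex]) (use assms in auto)
  moreover have "(1 - x/U) *\<^sub>R 0 + (x/U) *\<^sub>R (l*U) = l * x"
    using assms by simp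
  ultimately show ?thesis
    by (simp add: algebra_simps diff_divide_distrib)
qed

lemma nn_integral_exp_le_bounded:
  fixes U :: nat and l \<mu> :: real
  assumes bounded: "\<forall>x\<in>set_pmf G. x \<le> U" and "U \<ge> 1"
    and mean: "(\<integral>\<^sup>+x. ennreal (real x) \<partial>G) \<le> ennreal \<mu>" and "l \<ge> 0" "\<mu> \<ge> 0"
  shows "(\<integral>\<^sup>+x. ennreal (exp (l * real x)) \<partial>G) \<le> ennreal (exp ((exp (l * real U) - 1) * \<mu> / real U))"
proof -
  define a where "a = (exp (l * real U) - 1) / real U"
  have "a \<ge> 0"
    unfolding a_def using assms by auto
  have "(\<integral>\<^sup>+x. ennreal (exp (l * real x)) \<partial>G) \<le> (\<integral>\<^sup>+x. ennreal (1 + a * real x) \<partial>G)"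
  proof (intro nn_integral_mono_AE, unfold AE_measure_pmf_iff, intro ballI ennreal_leI)
    fix x assume "x \<in> set_pmf G"
    then show "exp (l * real x) \<le> 1 + a * real x"
      using exp_le_chord[of "real x" "real U" l] bounded \<open>U \<ge> 1\<close> unfolding a_def by auto
  qed
  also have "\<dots> = 1 + ennreal a * (\<integral>\<^sup>+x. ennreal (real x) \<partial>G)"
    using \<open>a \<ge> 0\<close>
    by (simp add: ennreal_plus ennreal_mult nn_integral_add nn_integral_cmult measure_pmf.emeasure_space_1)
  also have "\<dots> \<le> ennreal (1 + a * \<mu>)"
    using mean \<open>a \<ge> 0\<close> \<open>\<mu> \<ge> 0\<close> by (simp add: ennreal_plus ennreal_mult mult_left_mono)
  also have "\<dots> \<le> ennreal (exp (a * \<mu>))"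
    by (intro ennreal_leI) (simp add: exp_ge_add_one_self add.commute)
  finally show ?thesis
    unfolding a_def by (simp add: field_simps)
qed

lemma emeasure_iid_sum_chernoff:
  fixes U :: nat and l \<mu> :: real
  assumes "\<forall>x\<in>set_pmf G. x \<le> U" "U \<ge> 1" "(\<integral>\<^sup>+x. ennreal (real x) \<partial>G) \<le> ennreal \<mu>" "l \<ge> 0" "\<mu> \<ge> 0"
  shows "emeasure (iid_sum G k) {s. t < real s}
           \<le> ennreal (exp (real k * ((exp (l * real U) - 1) * \<mu> / real U) - l * t))"
proof -
  have markov: "indicator {s. t < real s} s \<le> ennreal (exp (- l * t)) * ennreal (exp (l * real s))"
    for s :: nat
  proof (cases "t < real s")
    case True
    then have "1 \<le> exp (- l * t) * exp (l * real s)"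
      using \<open>l \<ge> 0\<close> by (simp add: mult_left_mono flip: exp_add)
    then show ?thesis
      using True by (simp flip: ennreal_mult)
  qed simp
  have "emeasure (iid_sum G k) {s. t < real s}
      \<le> (\<integral>\<^sup>+s. ennreal (exp (- l * t)) * ennreal (exp (l * real s)) \<partial>iid_sum G k)"
    by (simp only: nn_integral_indicator[symmetric] sets_measure_pmf UNIV_I)
       (intro nn_integral_mono markov)
  also have "\<dots> = ennreal (exp (- l * t)) * (\<integral>\<^sup>+x. ennreal (exp (l * real x)) \<partial>G) ^ k"
    by (simp add: nn_integral_cmult nn_integral_exp_iid_sum)
  also have "\<dots> \<le> ennreal (exp (- l * t)) * ennreal (exp ((exp (l * real U) - 1) * \<mu> / real U)) ^ k"
    by (intro mult_left_mono power_mono nn_integral_exp_le_bounded assms) auto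
  also have "\<dots> = ennreal (exp (real k * ((exp (l * real U) - 1) * \<mu> / real U) - l * t))"
    by (simp add: ennreal_power exp_of_nat_mult[symmetric] flip: ennreal_mult exp_add)
  finally show ?thesis .
qed

lemma exists_chernoff_parameter:
  fixes a s U :: real and r :: nat
  assumes "a > 0" "exp 1 * a < s" "U > 0" "real r \<le> s / U"
  shows "\<exists>l\<ge>0. exp (a * (exp (l * U) - 1) / U - l * s) \<le> (exp 1 * a / s) ^ r"
proof -
  define q where "q = exp 1 * a / s"
  have "s > 0"
    using assms(1,2) exp_gt_zero[of 1] by (meson mult_pos_pos order.strict_trans)
  then have "q > 0" "q < 1"
    unfolding q_def using assms(1,2) by auto
  then have "ln q < 0"
    by simp
  have ln_ratio: "ln (s / a) = 1 - ln q"
    unfolding q_def using assms(1) \<open>s > 0\<close> by (simp add: ln_div ln_mult)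
  \<comment> \<open>This \<open>l\<close> minimises the exponent.\<close>
  define l where "l = ln (s / a) / U"
  have "l \<ge> 0"
    unfolding l_def ln_ratio using \<open>ln q < 0\<close> \<open>U > 0\<close> by simp
  have "exp (l * U) = s / a"
    unfolding l_def using \<open>U > 0\<close> \<open>a > 0\<close> \<open>s > 0\<close> by simp
  then have "a * (exp (l * U) - 1) / U - l * s = - a / U + (s / U) * ln q"
    unfolding l_def ln_ratio using \<open>a > 0\<close> \<open>U > 0\<close> by (simp add: field_simps)
  also have "\<dots> \<le> (s / U) * ln q"
    using \<open>a > 0\<close> \<open>U > 0\<close> by simp
  also have "\<dots> \<le> real r * ln q"
    using assms(4) \<open>ln q < 0\<close> by (intro mult_right_mono_neg) auto
  finally have "exp (a * (exp (l * U) - 1) / U - l * s) \<le> exp (real r * ln q)"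
    by simp
  also have "\<dots> = q ^ r"
    using \<open>q > 0\<close> by (simp add: exp_of_nat_mult)
  finally show ?thesis
    unfolding q_def using \<open>l \<ge> 0\<close> by blast
qed

lemma emeasure_iid_sum_bounded_tail:
  fixes s \<mu> :: real and r k U :: nat
  assumes bounded: "\<forall>x\<in>set_pmf G. x \<le> U" and U: "real U \<le> s / real r"
    and mean: "(\<integral>\<^sup>+x. ennreal (real x) \<partial>G) \<le> ennreal \<mu>" "\<mu> > 0" and "s > 0" "r \<ge> 1"
  shows "emeasure (iid_sum G k) {v. s < real v} \<le> ennreal ((exp 1 * real k * \<mu> / s) ^ r)"
proof (cases "U = 0 \<or> k = 0")
  case True
  have "{v. s < real v} \<inter> set_pmf (iid_sum G k) = {}"
    using set_pmf_iid_sum_le[OF bounded] True \<open>s > 0\<close> by fastforce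
  then have "emeasure (iid_sum G k) {v. s < real v} = 0"
    by (meson in_null_sets_measure_pmfI null_setsD1)
  then show ?thesis
    by simp
next
  case False
  then have "U \<ge> 1" "k \<ge> 1"
    by auto
  show ?thesis
  proof (cases "exp 1 * (real k * \<mu>) < s")
    case False
    then have "1 \<le> (exp 1 * real k * \<mu> / s) ^ r"
      using \<open>s > 0\<close> by (simp add: one_le_power)
    then show ?thesis
      using measure_pmf.emeasure_le_1[of "iid_sum G k"] by (metis ennreal_leI ennreal_1 order_trans)
  next
    case True
    have "real r \<le> s / real U"
      using U \<open>U \<ge> 1\<close> \<open>r \<ge> 1\<close> \<open>s > 0\<close> by (simp add: field_simps)
    moreover have "real k * \<mu> > 0" "real U > 0"
      using \<open>k \<ge> 1\<close> \<open>\<mu> > 0\<close> \<open>U \<ge> 1\<close> by auto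
    ultimately obtain l :: real where "l \<ge> 0" and
      l: "exp (real k * \<mu> * (exp (l * real U) - 1) / real U - l * s) \<le> (exp 1 * (real k * \<mu>) / s) ^ r"
      using exists_chernoff_parameter[OF _ True] by blast
    have "emeasure (iid_sum G k) {v. s < real v}
        \<le> ennreal (exp (real k * ((exp (l * real U) - 1) * \<mu> / real U) - l * s))"
      using emeasure_iid_sum_chernoff[OF bounded \<open>U \<ge> 1\<close> mean(1) \<open>l \<ge> 0\<close> less_imp_le[OF mean(2)]] .
    also have "\<dots> \<le> ennreal ((exp 1 * real k * \<mu> / s) ^ r)"
      using l by (intro ennreal_leI) (simp add: mult_ac)
    finally show ?thesis .
  qed
qed

lemma emeasure_iid_sum_tail:
  fixes G :: "nat pmf" and s \<mu> :: real and r k :: nat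
  assumes mean: "(\<integral>\<^sup>+x. ennreal (real x) \<partial>G) \<le> ennreal \<mu>" "\<mu> > 0" and "s > 0" "r \<ge> 1"
  shows "emeasure (iid_sum G k) {v. s < real v}
           \<le> of_nat k * emeasure G {x. s / real r < real x} + ennreal ((exp 1 * real k * \<mu> / s) ^ r)"
proof -
  define U where "U = nat \<lfloor>s / real r\<rfloor>"
  have "s / real r \<ge> 0"
    using \<open>s > 0\<close> by simp
  then have U_less_iff: "{x. U < x} = {x. s / real r < real x}"
    unfolding U_def by (auto simp: nat_less_iff floor_less_iff)
  have "real U \<le> s / real r"
    unfolding U_def using \<open>s / real r \<ge> 0\<close> by (simp add: of_nat_floor)
  have "(\<integral>\<^sup>+x. ennreal (real x) \<partial>map_pmf (\<lambda>x. min x U) G) \<le> (\<integral>\<^sup>+x. ennreal (real x) \<partial>G)"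
    by (simp add: nn_integral_mono)
  then have "emeasure (iid_sum (map_pmf (\<lambda>x. min x U) G) k) {v. s < real v}
      \<le> ennreal ((exp 1 * real k * \<mu> / s) ^ r)"
    using mean \<open>s > 0\<close> \<open>r \<ge> 1\<close> \<open>real U \<le> s / real r\<close>
    by (intro emeasure_iid_sum_bounded_tail) (auto intro: order_trans)
  then show ?thesis
    using emeasure_iid_sum_le_truncated[of G k s U] U_less_iff
    by (metis (no_types, lifting) add_left_mono order_trans)
qed

subsection \<open>Random sums under dominated variation\<close>

lemma dominated_iterate:
  fixes T :: "real \<Rightarrow> real"
  assumes "\<forall>x. T (x / 2) \<le> C * T x" "C \<ge> 0"
  shows "T (L / 2 ^ j) \<le> C ^ j * T L"
proof (induction j)
  case 0
  then show ?case by simp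
next
  case (Suc j)
  have "T (L / 2 ^ Suc j) = T ((L / 2 ^ j) / 2)"
    by (simp add: field_simps)
  also have "\<dots> \<le> C * T (L / 2 ^ j)"
    using assms(1) by blast
  also have "\<dots> \<le> C * (C ^ j * T L)"
    using Suc assms(2) by (intro mult_left_mono) auto
  finally show ?case
    by simp
qed

lemma geometric_sum_le_two:
  fixes q :: real
  assumes "0 \<le> q" "q \<le> 1/2"
  shows "(\<Sum>j<J. q ^ j) \<le> 2"
proof -
  have "(\<Sum>j<J. q ^ j) = (1 - q ^ J) / (1 - q)"
    using assms by (simp add: sum_gp_strict)
  also have "\<dots> \<le> 1 / (1 - q)"
    using assms by (intro divide_right_mono) auto
  also have "\<dots> \<le> 2"
    using assms by (simp add: field_simps)
  finally show ?thesis .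
qed

lemma dyadic_weighted_sum_le:
  fixes L C K T :: real and r J :: nat
  assumes "C \<ge> 1" "2 * C \<le> 2 ^ r" "K \<ge> 0" "T \<ge> 0" "L > 0"
  shows "(\<Sum>j<J. (L / 2 ^ j) ^ r * (K * (C ^ Suc j * T))) \<le> 2 * C * K * L ^ r * T"
proof -
  have "(\<Sum>j<J. (L / 2 ^ j) ^ r * (K * (C ^ Suc j * T))) = C * K * L ^ r * T * (\<Sum>j<J. (C / 2 ^ r) ^ j)"
    unfolding sum_distrib_left
    by (rule sum.cong[OF refl]) (simp add: power_divide mult.commute mult.left_commute flip: power_mult)
  also have "\<dots> \<le> C * K * L ^ r * T * 2"
    using assms by (intro mult_left_mono geometric_sum_le_two) (auto simp: field_simps)
  finally show ?thesis
    by (simp add: mult_ac)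
qed

lemma power_indicator_le_dyadic_sum:
  fixes L :: real and k r J :: nat
  assumes "L / 2 ^ J < 1" "r \<ge> 1" "L > 0"
  shows "real k ^ r * indicator {k. real k \<le> L} k
           \<le> (\<Sum>j<J. (L / 2 ^ j) ^ r * indicator {k. L / 2 ^ Suc j < real k} k)"
proof (cases "k \<ge> 1 \<and> real k \<le> L")
  case False
  then have "real k ^ r * indicator {k. real k \<le> L} k = 0"
    using assms(2) by (cases "k = 0") (auto simp: indicator_def)
  moreover have "0 \<le> (\<Sum>j<J. (L / 2 ^ j) ^ r * indicator {k. L / 2 ^ Suc j < real k} k)"
    using assms(3) by (intro sum_nonneg) auto
  ultimately show ?thesis
    by linarith
next
  case True
  define S where "S = {j. j < J \<and> real k \<le> L / 2 ^ j}"
  have "J > 0"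
    using assms(1) True by (cases J) auto
  then have "0 \<in> S" "finite S"
    unfolding S_def using True by auto
  define j0 where "j0 = Max S"
  have "j0 \<in> S"
    unfolding j0_def using \<open>finite S\<close> \<open>0 \<in> S\<close> by (intro Max_in) auto
  then have "j0 < J" and k_le: "real k \<le> L / 2 ^ j0"
    unfolding S_def by auto
  have k_gt: "L / 2 ^ Suc j0 < real k"
  proof (cases "Suc j0 < J")
    case True
    have "Suc j0 \<notin> S"
      using Max_ge[OF \<open>finite S\<close>, of "Suc j0"] unfolding j0_def[symmetric] by auto
    then show ?thesis
      using True unfolding S_def by auto
  next
    case False
    then have "L / 2 ^ Suc j0 < 1"
      using assms(1) \<open>j0 < J\<close> by (metis Suc_lessI)
    then show ?thesis
      using True by linarith
  qed
  have "real k ^ r * indicator {k. real k \<le> L} k \<le> (L / 2 ^ j0) ^ r"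
    using True k_le by (simp add: power_mono)
  also have "\<dots> = (L / 2 ^ j0) ^ r * indicator {k. L / 2 ^ Suc j0 < real k} k"
    using k_gt by simp
  also have "\<dots> \<le> (\<Sum>j<J. (L / 2 ^ j) ^ r * indicator {k. L / 2 ^ Suc j < real k} k)"
    using \<open>j0 < J\<close> assms(3) by (intro member_le_sum) auto
  finally show ?thesis .
qed

lemma nn_integral_truncated_power_le:
  fixes N :: "nat pmf" and T :: "real \<Rightarrow> real" and L C K :: real and r :: nat
  assumes dom: "\<forall>x. T (x / 2) \<le> C * T x" and "C \<ge> 1" and T_nonneg: "\<forall>x. T x \<ge> 0"
    and tail: "\<forall>t. emeasure N {k. t < real k} \<le> ennreal (K * T t)" and "K \<ge> 0"
    and "r \<ge> 1" "2 * C \<le> 2 ^ r" and "L > 0"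
  shows "(\<integral>\<^sup>+k. ennreal (real k ^ r * indicator {k. real k \<le> L} k) \<partial>N) \<le> ennreal (2 * C * K * L ^ r * T L)"
proof -
  obtain J :: nat where J: "L / 2 ^ J < 1"
    using real_arch_pow[of 2 L] by (auto simp: field_simps)
  have nonneg: "0 \<le> (L / 2 ^ j) ^ r * (K * (C ^ Suc j * T L))" for j
    using \<open>L > 0\<close> \<open>C \<ge> 1\<close> \<open>K \<ge> 0\<close> T_nonneg by simp
  have "(\<integral>\<^sup>+k. ennreal (real k ^ r * indicator {k. real k \<le> L} k) \<partial>N)
      \<le> (\<integral>\<^sup>+k. (\<Sum>j<J. ennreal ((L / 2 ^ j) ^ r) * indicator {k. L / 2 ^ Suc j < real k} k) \<partial>N)"
  proof (intro nn_integral_mono)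
    fix k
    have "ennreal (real k ^ r * indicator {k. real k \<le> L} k)
        \<le> ennreal (\<Sum>j<J. (L / 2 ^ j) ^ r * indicator {k. L / 2 ^ Suc j < real k} k)"
      using power_indicator_le_dyadic_sum[OF J \<open>r \<ge> 1\<close> \<open>L > 0\<close>] by (rule ennreal_leI)
    also have "\<dots> = (\<Sum>j<J. ennreal ((L / 2 ^ j) ^ r) * indicator {k. L / 2 ^ Suc j < real k} k)"
      using \<open>L > 0\<close> by (subst sum_ennreal[symmetric]) (auto simp: indicator_def)
    finally show "ennreal (real k ^ r * indicator {k. real k \<le> L} k)
        \<le> (\<Sum>j<J. ennreal ((L / 2 ^ j) ^ r) * indicator {k. L / 2 ^ Suc j < real k} k)" .
  qed
  also have "\<dots> = (\<Sum>j<J. \<integral>\<^sup>+k. ennreal ((L / 2 ^ j) ^ r) * indicator {k. L / 2 ^ Suc j < real k} k \<partial>N)"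
    by (intro nn_integral_sum) auto
  also have "\<dots> = (\<Sum>j<J. ennreal ((L / 2 ^ j) ^ r) * emeasure N {k. L / 2 ^ Suc j < real k})"
    by (intro sum.cong refl nn_integral_cmult_indicator) simp
  also have "\<dots> \<le> (\<Sum>j<J. ennreal ((L / 2 ^ j) ^ r * (K * (C ^ Suc j * T L))))"
  proof (intro sum_mono)
    fix j
    have "emeasure N {k. L / 2 ^ Suc j < real k} \<le> ennreal (K * T (L / 2 ^ Suc j))"
      using tail by blast
    also have "\<dots> \<le> ennreal (K * (C ^ Suc j * T L))"
      using dominated_iterate[OF dom, of L "Suc j"] \<open>C \<ge> 1\<close> \<open>K \<ge> 0\<close>
      by (intro ennreal_leI mult_left_mono) auto
    finally show "ennreal ((L / 2 ^ j) ^ r) * emeasure N {k. L / 2 ^ Suc j < real k}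
        \<le> ennreal ((L / 2 ^ j) ^ r * (K * (C ^ Suc j * T L)))"
      using \<open>L > 0\<close> by (subst ennreal_mult') (auto intro: mult_left_mono)
  qed
  also have "\<dots> = ennreal (\<Sum>j<J. (L / 2 ^ j) ^ r * (K * (C ^ Suc j * T L)))"
    using nonneg by (subst sum_ennreal) auto
  also have "\<dots> \<le> ennreal (2 * C * K * L ^ r * T L)"
    using \<open>C \<ge> 1\<close> \<open>2 * C \<le> 2 ^ r\<close> \<open>K \<ge> 0\<close> T_nonneg \<open>L > 0\<close>
    by (intro ennreal_leI dyadic_weighted_sum_le) auto
  finally show ?thesis .
qed

lemma emeasure_random_sum_tail:
  fixes N G :: "nat pmf" and T :: "real \<Rightarrow> real" and C K \<mu>N \<mu> s :: real and r :: nat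
  assumes dom: "\<forall>x. T (x / 2) \<le> C * T x" and "C \<ge> 1" and T_nonneg: "\<forall>x. T x \<ge> 0"
    and tail: "\<forall>t. emeasure N {k. t < real k} \<le> ennreal (K * T t)" and "K \<ge> 0"
    and "r \<ge> 1" "2 * C \<le> 2 ^ r"
    and mean_N: "(\<integral>\<^sup>+k. ennreal (real k) \<partial>N) \<le> ennreal \<mu>N"
    and mean_G: "(\<integral>\<^sup>+x. ennreal (real x) \<partial>G) \<le> ennreal \<mu>" "\<mu> > 0" and "s > 0"
  shows "emeasure (bind_pmf N (iid_sum G)) {v. s < real v}
           \<le> ennreal (K * (1 + 2 * C * exp 1 ^ r) * T (s / \<mu>)) + ennreal \<mu>N * emeasure G {x. s / real r < real x}"
proof -
  define L where "L = s / \<mu>"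
  define a where "a = (exp 1 * \<mu> / s) ^ r"
  let ?P = "emeasure G {x. s / real r < real x}"
  let ?M = "\<lambda>k. real k ^ r * indicator {k. real k \<le> L} k"
  have "L > 0" "a \<ge> 0"
    unfolding L_def a_def using \<open>s > 0\<close> mean_G(2) by auto
  have a_L: "a * L ^ r = exp 1 ^ r"
    unfolding a_def L_def using \<open>s > 0\<close> mean_G(2) by (simp flip: power_mult_distrib)
  have pointwise: "emeasure (iid_sum G k) {v. s < real v}
      \<le> indicator {k. L < real k} k + (ennreal (real k) * ?P + ennreal a * ennreal (?M k))" for k
  proof (cases "L < real k")
    case True
    then show ?thesis
      using measure_pmf.emeasure_le_1[of "iid_sum G k"] by (simp add: add_increasing2)
  next
    case False
    have "(exp 1 * real k * \<mu> / s) ^ r = a * ?M k"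
      unfolding a_def using False by (simp add: mult_ac flip: power_mult_distrib)
    then show ?thesis
      using emeasure_iid_sum_tail[OF mean_G \<open>s > 0\<close> \<open>r \<ge> 1\<close>, of k] False \<open>a \<ge> 0\<close>
      by (simp add: ennreal_mult' ennreal_of_nat_eq_real_of_nat)
  qed
  have "emeasure (bind_pmf N (iid_sum G)) {v. s < real v} = (\<integral>\<^sup>+k. emeasure (iid_sum G k) {v. s < real v} \<partial>N)"
    by simp
  also have "\<dots> \<le> (\<integral>\<^sup>+k. indicator {k. L < real k} k + (ennreal (real k) * ?P + ennreal a * ennreal (?M k)) \<partial>N)"
    by (intro nn_integral_mono pointwise)
  also have "\<dots> = emeasure N {k. L < real k}
      + ((\<integral>\<^sup>+k. ennreal (real k) \<partial>N) * ?P + ennreal a * (\<integral>\<^sup>+k. ennreal (?M k) \<partial>N))"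
    by (simp add: nn_integral_add nn_integral_cmult nn_integral_multc)
  also have "\<dots> \<le> ennreal (K * T L) + (ennreal \<mu>N * ?P + ennreal a * ennreal (2 * C * K * L ^ r * T L))"
    using tail nn_integral_truncated_power_le[OF dom \<open>C \<ge> 1\<close> T_nonneg tail \<open>K \<ge> 0\<close> \<open>r \<ge> 1\<close> \<open>2 * C \<le> 2 ^ r\<close> \<open>L > 0\<close>]
    by (intro add_mono mult_right_mono mult_left_mono mean_N) auto
  also have "\<dots> = (ennreal (K * T L) + ennreal (a * (2 * C * K * L ^ r * T L))) + ennreal \<mu>N * ?P"
    by (simp only: ennreal_mult'[OF \<open>a \<ge> 0\<close>] add_ac)
  also have "ennreal (K * T L) + ennreal (a * (2 * C * K * L ^ r * T L))
      = ennreal (K * T L + a * (2 * C * K * L ^ r * T L))"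
    using \<open>a \<ge> 0\<close> \<open>K \<ge> 0\<close> \<open>C \<ge> 1\<close> \<open>L > 0\<close> T_nonneg by (intro ennreal_plus[symmetric]) auto
  also have "K * T L + a * (2 * C * K * L ^ r * T L) = K * (1 + 2 * C * exp 1 ^ r) * T L"
    by (simp add: a_L[symmetric] algebra_simps)
  finally show ?thesis
    unfolding L_def .
qed

subsection \<open>Tails of the generations\<close>

lemma Fbar_nonneg: "Fbar F x \<ge> 0"
  unfolding Fbar_def by simp

lemma Fbar_mono: "x \<le> y \<Longrightarrow> Fbar F y \<le> Fbar F x"
  unfolding Fbar_def by (intro measure_pmf.finite_measure_mono) auto

lemma emeasure_eq_Fbar: "emeasure (measure_pmf F) {k. x < real k} = ennreal (Fbar F x)"
  unfolding Fbar_def by (simp add: measure_pmf.emeasure_eq_measure)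

lemma Fbar_one_pos:
  assumes "integrable (measure_pmf F) real" "offspring_mean F > 1"
  shows "Fbar F 1 > 0"
proof (rule ccontr)
  assume "\<not> Fbar F 1 > 0"
  then have "measure_pmf.prob F {k. 1 < real k} = 0"
    using Fbar_nonneg[of F 1] unfolding Fbar_def by linarith
  then have "AE k in measure_pmf F. real k \<le> 1"
    unfolding AE_measure_pmf_iff by (force simp: measure_pmf_zero_iff)
  then have "offspring_mean F \<le> measure_pmf.expectation F (\<lambda>_. 1::real)"
    unfolding offspring_mean_def by (intro integral_mono_AE[OF assms(1)]) simp_all
  then show False
    using assms(2) by simp
qed

lemma one_le_Fbar_scaled:
  assumes "Fbar F 1 > 0" "1 / Fbar F 1 \<le> K" "t \<le> 1"
  shows "1 \<le> K * Fbar F t"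
proof -
  have "1 \<le> (1 / Fbar F 1) * Fbar F t"
    using Fbar_mono[OF assms(3), of F] assms(1) by (simp add: field_simps)
  also have "\<dots> \<le> K * Fbar F t"
    using assms(2) by (intro mult_right_mono Fbar_nonneg)
  finally show ?thesis .
qed

lemma Fbar_divide_le:
  assumes dom: "\<forall>x. Fbar F (x / 2) \<le> C * Fbar F x" and "C \<ge> 0"
    and "0 < d" "d \<le> 2 ^ j" "t > 0"
  shows "Fbar F (t / d) \<le> C ^ j * Fbar F t"
proof -
  have "Fbar F (t / d) \<le> Fbar F (t / 2 ^ j)"
    using assms(3-5) by (intro Fbar_mono divide_left_mono) auto
  also have "\<dots> \<le> C ^ j * Fbar F t"
    using dominated_iterate[OF dom \<open>C \<ge> 0\<close>] .
  finally show ?thesis .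
qed

lemma gw_tail_le_Fbar:
  fixes F :: "nat pmf" and C m :: real and r :: nat
  assumes dom: "\<forall>x. Fbar F (x / 2) \<le> C * Fbar F x" and "C \<ge> 1" and "r \<ge> 1" "2 * C \<le> 2 ^ r"
    and mean: "(\<integral>\<^sup>+x. ennreal (real x) \<partial>F) = ennreal m" "m > 0"
    and "Fbar F 1 > 0"
  shows "\<exists>K\<ge>0. \<forall>t. emeasure (gw F n) {k. t < real k} \<le> ennreal (K * Fbar F t)"
proof (induction n)
  case 0
  have "emeasure (gw F 0) {k. t < real k} \<le> ennreal (1 / Fbar F 1 * Fbar F t)" for t
    using one_le_Fbar_scaled[OF \<open>Fbar F 1 > 0\<close> order_refl, of t]
    by (cases "t < 1") (auto simp: ennreal_leI[of 1, simplified])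
  then show ?case
    using \<open>Fbar F 1 > 0\<close> by (intro exI[of _ "1 / Fbar F 1"]) auto
next
  case (Suc n)
  then obtain K where "K \<ge> 0" and tail_n: "\<forall>t. emeasure (gw F n) {k. t < real k} \<le> ennreal (K * Fbar F t)"
    by auto
  obtain j :: nat where "m \<le> 2 ^ j"
    using real_arch_pow[of 2 m] by (auto intro: less_imp_le)
  define K' where "K' = max (1 / Fbar F 1) (K * (1 + 2 * C * exp 1 ^ r) * C ^ j + m ^ n * C ^ r)"
  have "emeasure (gw F (Suc n)) {k. t < real k} \<le> ennreal (K' * Fbar F t)" for t
  proof (cases "t > 0")
    case False
    then have "1 \<le> K' * Fbar F t"
      using \<open>Fbar F 1 > 0\<close> unfolding K'_def by (intro one_le_Fbar_scaled) auto
    then show ?thesis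
      using measure_pmf.emeasure_le_1[of "gw F (Suc n)"] by (metis ennreal_leI ennreal_1 order_trans)
  next
    case True
    have "real r \<le> 2 ^ r"
      using of_nat_less_two_power[of r] by simp
    then have tails: "Fbar F (t / m) \<le> C ^ j * Fbar F t" "Fbar F (t / real r) \<le> C ^ r * Fbar F t"
      using Fbar_divide_le[OF dom] \<open>C \<ge> 1\<close> \<open>m > 0\<close> \<open>m \<le> 2 ^ j\<close> \<open>r \<ge> 1\<close> True by auto
    have "emeasure (gw F (Suc n)) {k. t < real k}
        \<le> ennreal (K * (1 + 2 * C * exp 1 ^ r) * Fbar F (t / m)) + ennreal (m ^ n) * emeasure F {x. t / real r < real x}"
      unfolding gw.simps
      by (rule emeasure_random_sum_tail[OF dom \<open>C \<ge> 1\<close> _ tail_n \<open>K \<ge> 0\<close> \<open>r \<ge> 1\<close> \<open>2 * C \<le> 2 ^ r\<close>])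
        (use mean True in \<open>auto simp: Fbar_nonneg nn_integral_gw_real\<close>)
    also have "\<dots> = ennreal (K * (1 + 2 * C * exp 1 ^ r) * Fbar F (t / m) + m ^ n * Fbar F (t / real r))"
      using \<open>K \<ge> 0\<close> \<open>C \<ge> 1\<close> \<open>m > 0\<close> by (simp add: emeasure_eq_Fbar Fbar_nonneg ennreal_plus ennreal_mult')
    also have "\<dots> \<le> ennreal ((K * (1 + 2 * C * exp 1 ^ r) * C ^ j + m ^ n * C ^ r) * Fbar F t)"
      using tails \<open>K \<ge> 0\<close> \<open>C \<ge> 1\<close> \<open>m > 0\<close>
      by (intro ennreal_leI) (simp add: algebra_simps add_mono mult_left_mono)
    also have "\<dots> \<le> ennreal (K' * Fbar F t)"
      unfolding K'_def by (intro ennreal_leI mult_right_mono Fbar_nonneg) simp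
    finally show ?thesis .
  qed
  moreover have "K' \<ge> 0"
    unfolding K'_def using \<open>Fbar F 1 > 0\<close> by (intro max.coboundedI1) simp
  ultimately show ?case
    by blast
qed

lemma gw_tail_le_Fbar_upto:
  fixes F :: "nat pmf" and C m :: real and r :: nat
  assumes "\<forall>x. Fbar F (x / 2) \<le> C * Fbar F x" "C \<ge> 1" "r \<ge> 1" "2 * C \<le> 2 ^ r"
    and "(\<integral>\<^sup>+x. ennreal (real x) \<partial>F) = ennreal m" "m > 0" and "Fbar F 1 > 0"
  shows "\<exists>K\<ge>0. \<forall>n\<le>N. \<forall>t. emeasure (gw F n) {k. t < real k} \<le> ennreal (K * Fbar F t)"
proof -
  obtain K where K: "\<And>n. K n \<ge> 0 \<and> (\<forall>t. emeasure (gw F n) {k. t < real k} \<le> ennreal (K n * Fbar F t))"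
    using gw_tail_le_Fbar[OF assms] by metis
  have "emeasure (gw F n) {k. t < real k} \<le> ennreal ((\<Sum>i\<le>N. K i) * Fbar F t)" if "n \<le> N" for n t
  proof -
    have "K n \<le> (\<Sum>i\<le>N. K i)"
      using K that by (intro member_le_sum) auto
    then have "ennreal (K n * Fbar F t) \<le> ennreal ((\<Sum>i\<le>N. K i) * Fbar F t)"
      by (intro ennreal_leI mult_right_mono Fbar_nonneg)
    then show ?thesis
      using K order_trans by blast
  qed
  moreover have "(\<Sum>i\<le>N. K i) \<ge> 0"
    using K by (simp add: sum_nonneg)
  ultimately show ?thesis
    by blast
qed

lemma exists_contracting_power:
  fixes m r \<delta> c' :: real
  assumes "m > 1" "r \<ge> 1" "\<delta> > 0"
  shows "\<exists>N\<ge>1. m ^ N / r > 1 \<and> (\<forall>t\<ge>0. m ^ N * (c' * t / (m ^ N / r) powr (1 + \<delta>)) \<le> t / 2)"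
proof -
  define Y where "Y = max 2 (2 * r * c') powr (1 / \<delta>)"
  have "Y > 1"
    unfolding Y_def using \<open>\<delta> > 0\<close> by (intro gr_one_powr) auto
  have "2 * r * c' \<le> Y powr \<delta>"
    unfolding Y_def using \<open>\<delta> > 0\<close> by (simp add: powr_powr)
  obtain N where "r * Y < m ^ N"
    using real_arch_pow[OF \<open>m > 1\<close>] by blast
  define y0 where "y0 = m ^ N / r"
  have "Y < y0"
    unfolding y0_def using \<open>r * Y < m ^ N\<close> \<open>r \<ge> 1\<close> by (simp add: field_simps)
  then have "y0 > 1" "Y powr \<delta> \<le> y0 powr \<delta>"
    using \<open>Y > 1\<close> \<open>\<delta> > 0\<close> by (auto intro: powr_mono2)
  then have "2 * r * c' \<le> y0 powr \<delta>"
    using \<open>2 * r * c' \<le> Y powr \<delta>\<close> by linarith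
  have "N \<ge> 1"
    using \<open>y0 > 1\<close> \<open>r \<ge> 1\<close> unfolding y0_def by (cases N) (auto simp: field_simps)
  have "m ^ N * (c' * t / y0 powr (1 + \<delta>)) \<le> t / 2" if "t \<ge> 0" for t
  proof -
    have "m ^ N * (c' * t / y0 powr (1 + \<delta>)) = (r * c' / y0 powr \<delta>) * t"
      unfolding y0_def using \<open>r \<ge> 1\<close> \<open>y0 > 1\<close>[unfolded y0_def] by (simp add: powr_add field_simps)
    also have "\<dots> \<le> 1 / 2 * t"
      using \<open>y0 > 1\<close> \<open>2 * r * c' \<le> y0 powr \<delta>\<close> that by (intro mult_right_mono) (simp_all add: field_simps)
    finally show ?thesis
      by simp
  qed
  then show ?thesis
    using \<open>N \<ge> 1\<close> \<open>y0 > 1\<close> unfolding y0_def by blast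
qed

lemma gw_tail_recursion:
  fixes F :: "nat pmf" and C m K x :: real and r N n :: nat
  assumes dom: "\<forall>x. Fbar F (x / 2) \<le> C * Fbar F x" and "C \<ge> 1" and "r \<ge> 1" "2 * C \<le> 2 ^ r"
    and mean: "(\<integral>\<^sup>+x. ennreal (real x) \<partial>F) = ennreal m" "m \<ge> 1"
    and "K \<ge> 0" and tail_N: "\<forall>t. emeasure (gw F N) {k. t < real k} \<le> ennreal (K * Fbar F t)"
    and "x > 0"
  shows "measure_pmf.prob (gw F (N + n)) {k. x * m ^ (N + n) < real k}
           \<le> K * (1 + 2 * C * exp 1 ^ r) * Fbar F x
             + m ^ N * measure_pmf.prob (gw F n) {k. x * (m ^ N / real r) * m ^ n < real k}"
proof -
  define A where "A = K * (1 + 2 * C * exp 1 ^ r)"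
  define P where "P = measure_pmf.prob (gw F n) {k. x * (m ^ N / real r) * m ^ n < real k}"
  have "A \<ge> 0" "P \<ge> 0"
    unfolding A_def P_def using \<open>K \<ge> 0\<close> \<open>C \<ge> 1\<close> by auto
  define s where "s = x * m ^ (N + n)"
  have "s > 0"
    unfolding s_def using \<open>x > 0\<close> \<open>m \<ge> 1\<close> by simp
  have "emeasure (bind_pmf (gw F N) (iid_sum (gw F n))) {k. s < real k}
      \<le> ennreal (A * Fbar F (s / m ^ n)) + ennreal (m ^ N) * emeasure (gw F n) {k. s / real r < real k}"
    unfolding A_def
    by (rule emeasure_random_sum_tail[OF dom \<open>C \<ge> 1\<close> _ tail_N \<open>K \<ge> 0\<close> \<open>r \<ge> 1\<close> \<open>2 * C \<le> 2 ^ r\<close>])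
      (use mean \<open>s > 0\<close> in \<open>auto simp: Fbar_nonneg nn_integral_gw_real\<close>)
  moreover have "s / m ^ n = x * m ^ N" "s / real r = x * (m ^ N / real r) * m ^ n"
    unfolding s_def using \<open>m \<ge> 1\<close> by (simp_all add: power_add)
  ultimately have "ennreal (measure_pmf.prob (gw F (N + n)) {k. s < real k})
      \<le> ennreal (A * Fbar F (x * m ^ N)) + ennreal (m ^ N) * ennreal P"
    unfolding gw_add P_def by (simp add: measure_pmf.emeasure_eq_measure)
  also have "\<dots> = ennreal (A * Fbar F (x * m ^ N) + m ^ N * P)"
    using \<open>A \<ge> 0\<close> \<open>P \<ge> 0\<close> \<open>m \<ge> 1\<close> by (simp add: Fbar_nonneg ennreal_plus ennreal_mult')
  finally have "measure_pmf.prob (gw F (N + n)) {k. s < real k} \<le> A * Fbar F (x * m ^ N) + m ^ N * P"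
    using \<open>A \<ge> 0\<close> \<open>P \<ge> 0\<close> \<open>m \<ge> 1\<close> ennreal_le_iff[of "A * Fbar F (x * m ^ N) + m ^ N * P"]
    by (simp add: Fbar_nonneg)
  also have "A * Fbar F (x * m ^ N) \<le> A * Fbar F x"
    using \<open>A \<ge> 0\<close> \<open>x > 0\<close> \<open>m \<ge> 1\<close> by (intro mult_left_mono Fbar_mono) (auto simp: one_le_power)
  finally show ?thesis
    unfolding A_def P_def s_def by simp
qed

lemma gw_normalized_tail_le_Fbar_of_contraction:
  fixes F :: "nat pmf" and C m \<delta> c' K :: real and r N :: nat
  assumes dom: "\<forall>x. Fbar F (x / 2) \<le> C * Fbar F x" and "C \<ge> 1" and "r \<ge> 1" "2 * C \<le> 2 ^ r"
    and mean: "(\<integral>\<^sup>+x. ennreal (real x) \<partial>F) = ennreal m" "m > 1" and "Fbar F 1 > 0"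
    and tail_bound: "\<forall>x y. x > 1 \<longrightarrow> y > 1 \<longrightarrow> Fbar F (x * y) \<le> c' * Fbar F x / y powr (1 + \<delta>)"
    and "N \<ge> 1" "m ^ N / real r > 1"
    and contraction: "\<forall>t\<ge>0. m ^ N * (c' * t / (m ^ N / real r) powr (1 + \<delta>)) \<le> t / 2"
    and "K \<ge> 0" and tails: "\<forall>n\<le>N. \<forall>t. emeasure (gw F n) {k. t < real k} \<le> ennreal (K * Fbar F t)"
  shows "measure_pmf.prob (gw F n) {k. x * m ^ n < real k}
           \<le> max (2 * (K * (1 + 2 * C * exp 1 ^ r))) (max K (1 / Fbar F 1)) * Fbar F x"
proof (induction n arbitrary: x rule: less_induct)
  case (less n)
  define A where "A = K * (1 + 2 * C * exp 1 ^ r)"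
  define c where "c = max (2 * A) (max K (1 / Fbar F 1))"
  define y0 where "y0 = m ^ N / real r"
  have "c \<ge> 0" "y0 > 1"
    unfolding c_def y0_def using \<open>K \<ge> 0\<close> \<open>m ^ N / real r > 1\<close> by (auto simp: le_max_iff_disj)
  have "x \<le> 1 \<or> (x > 1 \<and> n \<le> N) \<or> (x > 1 \<and> n = N + (n - N) \<and> n - N < n)"
    using \<open>N \<ge> 1\<close> by auto
  then consider "x \<le> 1" | "x > 1" "n \<le> N" | n' where "x > 1" "n = N + n'" "n' < n"
    by blast
  then have "measure_pmf.prob (gw F n) {k. x * m ^ n < real k} \<le> c * Fbar F x"
  proof cases
    case 1
    then have "1 \<le> c * Fbar F x"
      using \<open>Fbar F 1 > 0\<close> unfolding c_def by (intro one_le_Fbar_scaled) auto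
    then show ?thesis
      using measure_pmf.prob_le_1[of "gw F n" "{k. x * m ^ n < real k}"] by linarith
  next
    case 2
    then have "measure_pmf.prob (gw F n) {k. x * m ^ n < real k} \<le> K * Fbar F (x * m ^ n)"
      using tails \<open>K \<ge> 0\<close> ennreal_le_iff[of "K * Fbar F (x * m ^ n)"]
      by (simp add: measure_pmf.emeasure_eq_measure Fbar_nonneg)
    also have "\<dots> \<le> K * Fbar F x"
      using 2 \<open>m > 1\<close> \<open>K \<ge> 0\<close> by (intro mult_left_mono Fbar_mono) (auto simp: one_le_power)
    also have "\<dots> \<le> c * Fbar F x"
      unfolding c_def by (intro mult_right_mono Fbar_nonneg) simp
    finally show ?thesis .
  next
    case 3
    have "measure_pmf.prob (gw F n') {k. x * y0 * m ^ n' < real k} \<le> c * Fbar F (x * y0)"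
      using less.IH[OF \<open>n' < n\<close>] unfolding c_def A_def .
    also have "\<dots> \<le> c * (c' * Fbar F x / y0 powr (1 + \<delta>))"
      using tail_bound \<open>x > 1\<close> \<open>y0 > 1\<close> \<open>c \<ge> 0\<close> by (intro mult_left_mono) auto
    finally have IH: "measure_pmf.prob (gw F n') {k. x * y0 * m ^ n' < real k}
        \<le> c * (c' * Fbar F x / y0 powr (1 + \<delta>))" .
    have "measure_pmf.prob (gw F n) {k. x * m ^ n < real k}
        \<le> A * Fbar F x + m ^ N * measure_pmf.prob (gw F n') {k. x * y0 * m ^ n' < real k}"
      unfolding \<open>n = N + n'\<close> A_def y0_def
      using gw_tail_recursion[OF dom \<open>C \<ge> 1\<close> \<open>r \<ge> 1\<close> \<open>2 * C \<le> 2 ^ r\<close> mean(1) _ \<open>K \<ge> 0\<close>]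
        tails \<open>m > 1\<close> \<open>x > 1\<close> by simp
    also have "\<dots> \<le> A * Fbar F x + m ^ N * (c * (c' * Fbar F x / y0 powr (1 + \<delta>)))"
      using IH \<open>m > 1\<close> by (intro add_left_mono mult_left_mono) auto
    also have "\<dots> = A * Fbar F x + c * (m ^ N * (c' * Fbar F x / y0 powr (1 + \<delta>)))"
      by (simp add: mult_ac)
    also have "\<dots> \<le> c / 2 * Fbar F x + c * (Fbar F x / 2)"
      using contraction Fbar_nonneg[of F x] \<open>c \<ge> 0\<close> unfolding c_def y0_def
      by (intro add_mono mult_right_mono mult_left_mono Fbar_nonneg) auto
    finally show ?thesis
      by simp
  qed
  then show ?case
    unfolding c_def A_def .
qed

lemma gw_normalized_tail_le_Fbar:
  fixes F :: "nat pmf" and C m \<delta> c' :: real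
  assumes dom: "\<forall>x. Fbar F (x / 2) \<le> C * Fbar F x" and "C \<ge> 1"
    and mean: "(\<integral>\<^sup>+x. ennreal (real x) \<partial>F) = ennreal m" "m > 1" and "Fbar F 1 > 0"
    and "\<delta> > 0" and tail_bound: "\<forall>x y. x > 1 \<longrightarrow> y > 1 \<longrightarrow> Fbar F (x * y) \<le> c' * Fbar F x / y powr (1 + \<delta>)"
  shows "\<exists>c. \<forall>n x. measure_pmf.prob (gw F n) {k. x * m ^ n < real k} \<le> c * Fbar F x"
proof -
  obtain r0 :: nat where "2 * C < 2 ^ r0"
    using real_arch_pow[of 2 "2 * C"] by auto
  define r where "r = Suc r0"
  have "r \<ge> 1" "2 * C \<le> 2 ^ r"
    unfolding r_def using \<open>2 * C < 2 ^ r0\<close> \<open>C \<ge> 1\<close> by auto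
  obtain N where "N \<ge> 1" "m ^ N / real r > 1"
    and "\<forall>t\<ge>0. m ^ N * (c' * t / (m ^ N / real r) powr (1 + \<delta>)) \<le> t / 2"
    using exists_contracting_power[OF \<open>m > 1\<close> _ \<open>\<delta> > 0\<close>, of "real r" c'] \<open>r \<ge> 1\<close> by auto
  moreover obtain K where "K \<ge> 0" "\<forall>n\<le>N. \<forall>t. emeasure (gw F n) {k. t < real k} \<le> ennreal (K * Fbar F t)"
    using gw_tail_le_Fbar_upto[OF dom \<open>C \<ge> 1\<close> \<open>r \<ge> 1\<close> \<open>2 * C \<le> 2 ^ r\<close> mean(1) _ \<open>Fbar F 1 > 0\<close>]
      \<open>m > 1\<close> by (meson less_trans zero_less_one)
  ultimately show ?thesis
    using gw_normalized_tail_le_Fbar_of_contraction[OF dom \<open>C \<ge> 1\<close> \<open>r \<ge> 1\<close> \<open>2 * C \<le> 2 ^ r\<close> mean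
        \<open>Fbar F 1 > 0\<close> tail_bound]
    by blast
qed

theorem corollary2:
  fixes F :: "nat pmf"
  assumes mean_finite: "integrable (measure_pmf F) real"
    and mean_gt1: "offspring_mean F > 1"
    and dominated: "\<exists>C. \<forall>x::real. Fbar F (x / 2) \<le> C * Fbar F x"
    and tail_bound: "\<exists>\<delta>>0. \<exists>c'. \<forall>x y::real. x > 1 \<longrightarrow> y > 1 \<longrightarrow>
                       Fbar F (x * y) \<le> c' * Fbar F x / y powr (1 + \<delta>)"
  shows "\<exists>c. \<forall>(n::nat) (x::real).
           measure_pmf.prob (gw F n) {k. real k / offspring_mean F ^ n > x} \<le> c * Fbar F x"
proof -
  define m where "m = offspring_mean F"
  obtain C0 where C0: "\<forall>x. Fbar F (x / 2) \<le> C0 * Fbar F x"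
    using dominated by blast
  have dom: "\<forall>x. Fbar F (x / 2) \<le> max C0 1 * Fbar F x"
    using C0 by (meson Fbar_nonneg max.cobounded1 mult_right_mono order_trans)
  obtain \<delta> c' where "\<delta> > 0" "\<forall>x y. x > 1 \<longrightarrow> y > 1 \<longrightarrow> Fbar F (x * y) \<le> c' * Fbar F x / y powr (1 + \<delta>)"
    using tail_bound by blast
  moreover have "(\<integral>\<^sup>+x. ennreal (real x) \<partial>F) = ennreal m"
    unfolding m_def offspring_mean_def by (rule nn_integral_eq_integral[OF mean_finite]) auto
  ultimately obtain c where "\<forall>n x. measure_pmf.prob (gw F n) {k. x * m ^ n < real k} \<le> c * Fbar F x"
    using gw_normalized_tail_le_Fbar[OF dom _ _ _ Fbar_one_pos[OF mean_finite mean_gt1]] mean_gt1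
    unfolding m_def by fastforce
  moreover have "{k. real k / m ^ n > x} = {k. x * m ^ n < real k}" for n x
    using mean_gt1 unfolding m_def[symmetric] by (auto simp: pos_less_divide_eq)
  ultimately show ?thesis
    unfolding m_def by auto
qed

end
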